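(* Let $S$ be a memory system satisfying the Causality assumption, let $n,m,v\ge1$, let $\Omega$ be a witness for $S(n,m,v)$, and let $\tau$ be an unambiguous trace of $S(n,m,v)$. If the graph $G(\Omega)(\tau)$ has a (directed) cycle, then it has a $k$-nice cycle for some $k$ with $1\le k\le\min\{n,m\}$.
   Context: Notation: $\mathbb{N}_n=\{1,\dots,n\}$, $\mathbb{W}_n=\{0,\dots,n\}$. Memory events $E(n,m,v)=\{R,W\}\times\mathbb{N}_n\times\mathbb{N}_m\times\mathbb{W}_v$; for $e=\langle a,b,c,d\rangle$, $op(e)=a$, $proc(e)=b$, $loc(e)=c$, $data(e)=d$; $0$ models the initial value of every location. A memory system is a family $S=(S(n,m,v))_{n,m,v\ge1}$, $S(n,m,v)$ a regular set of finite runs over an alphabet $E^a(n,m,v)\supseteq E(n,m,v)$ (other letters are internal events). The trace of a run is its subsequence of memory events; traces of $S(n,m,v)$ are traces of its runs. For a sequence $\tau$ of memory events with positions $1,\dots,|\tau|$: $P(\tau,i)=\{k: proc(\tau(k))=i\}$, $L(\tau,j)=\{k: loc(\tau(k))=j\}$, $L^w(\tau,j)=\{k\in L(\tau,j): op(\tau(k))=W\}$, $L^r(\tau,j)=\{k\in L(\tau,j): op(\tau(k))=R\}$. A trace $\tau$ is unambiguous if for every location $j$ and $x\in L^w(\tau,j)$, $data(\tau(x))\ne0$ and $data(\tau(x))\ne data(\tau(y))$ for all $y\in L^w(\tau,j)\setminus\{x\}$. Causality assumption: for all $n,m,v\ge1$, every trace $\tau$ of $S(n,m,v)$, every location $j$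 and every $x\in L^r(\tau,j)$, either $data(\tau(x))=0$ or there is $y\in L^w(\tau,j)$ with $data(\tau(x))=data(\tau(y))$. $M(\tau,i)=\{\langle u,v\rangle: u,v\in P(\tau,i), u<v\}$. A witness $\Omega$ for $S(n,m,v)$ assigns to every trace $\tau$ of $S(n,m,v)$ and location $j$ a strict total order $\Omega(\tau,j)$ on $L^w(\tau,j)$. For unambiguous $\tau$, $\Omega^e(\tau,j)\subseteq L(\tau,j)^2$: $\langle x,y\rangle\in\Omega^e(\tau,j)$ iff (1) $data(\tau(x))=data(\tau(y))$, $op(\tau(x))=W$, $op(\tau(y))=R$; or (2) $data(\tau(x))=0$ and $data(\tau(y))\ne0$; or (3) there are $a,b\in L^w(\tau,j)$ with $\langle a,b\rangle\in\Omega(\tau,j)$, $data(\tau(a))=data(\tau(x))$, $data(\tau(b))=data(\tau(y))$. $G(\Omega)(\tau)$ is the directed graph on $\{1,\dots,|\tau|\}$ with edge set $\bigcup_{1\le i\le n}M(\tau,i)\cup\bigcup_{1\le j\le m}\Omega^e(\tau,j)$. For $k\ge1$ let $\oplus$ denote addition in the cyclic group on $\mathbb{N}_k$ with identity $k$ (so $x\oplus1=x+1$ for $x<k$ and $k\oplus1=1$). A $k$-nice cycle in $G(\Omega)(\tau)$ is a sequence $u_1,v_1,\dots,u_k,v_k$ of pairwise distinct vertices such that: (i) for every $1\le x\le k$, $\langle u_x,v_x\rangle\in M(\tau,i)$ for some processor $i$ and $\langle v_x,u_{x\oplus1}\rangle\in\Omega^e(\tau,j)$ for some location $j$; (ii)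 for $1\le x<y\le k$, if $\langle u_x,v_x\rangle\in M(\tau,i)$ and $\langle u_y,v_y\rangle\in M(\tau,i')$ then $i\ne i'$; (iii) for $1\le x<y\le k$, if $\langle v_x,u_{x\oplus1}\rangle\in\Omega^e(\tau,j)$ and $\langle v_y,u_{y\oplus1}\rangle\in\Omega^e(\tau,j')$ then $j\ne j'$. *)

theory Defs
  imports Main
begin

datatype opr = R | W

type_synonym event = "opr \<times> nat \<times> nat \<times> nat"

definition ev_op :: "event \<Rightarrow> opr" where "ev_op e = fst e"
definition ev_proc :: "event \<Rightarrow> nat" where "ev_proc e = fst (snd e)"
definition ev_loc :: "event \<Rightarrow> nat" where "ev_loc e = fst (snd (snd e))"
definition ev_data :: "event \<Rightarrow> nat" where "ev_data e = snd (snd (snd e))"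

definition E :: "nat \<Rightarrow> nat \<Rightarrow> nat \<Rightarrow> event set" where
  "E n m v = UNIV \<times> {1..n} \<times> {1..m} \<times> {0..v}"

datatype 'i letter = MemE event | Internal 'i

definition regular_on :: "'a set \<Rightarrow> 'a list set \<Rightarrow> bool" where
  "regular_on A L \<longleftrightarrow>
     (\<exists>(Q::nat set) q0 (\<delta>::nat \<Rightarrow> 'a \<Rightarrow> nat) F.
        finite Q \<and> q0 \<in> Q \<and> F \<subseteq> Q \<and> (\<forall>q\<in>Q. \<forall>a\<in>A. \<delta> q a \<in> Q) \<and>
        L = {w. set w \<subseteq> A \<and> foldl \<delta> q0 w \<in> F})"

definition memory_system ::
  "(nat \<Rightarrow> nat \<Rightarrow> nat \<Rightarrow> 'i letter set) \<Rightarrow> (nat \<Rightarrow> nat \<Rightarrow> nat \<Rightarrow> 'i letter list set) \<Rightarrow> bool" where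
  "memory_system Ea S \<longleftrightarrow>
     (\<forall>n m v. n \<ge> 1 \<longrightarrow> m \<ge> 1 \<longrightarrow> v \<ge> 1 \<longrightarrow>
        finite (Ea n m v) \<and> (\<forall>e. MemE e \<in> Ea n m v \<longleftrightarrow> e \<in> E n m v) \<and>
        regular_on (Ea n m v) (S n m v))"

fun mem_part :: "'i letter \<Rightarrow> event list" where
  "mem_part (MemE e) = [e]"
| "mem_part (Internal _) = []"

definition trace :: "'i letter list \<Rightarrow> event list" where
  "trace r = concat (map mem_part r)"

definition traces :: "(nat \<Rightarrow> nat \<Rightarrow> nat \<Rightarrow> 'i letter list set) \<Rightarrow> nat \<Rightarrow> nat \<Rightarrow> nat \<Rightarrow> event list set" where
  "traces S n m v = trace ` S n m v"

section \<open>Positions (1-based)\<close>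

definition at :: "event list \<Rightarrow> nat \<Rightarrow> event" where
  "at \<tau> k = \<tau> ! (k - 1)"

definition pos :: "event list \<Rightarrow> nat set" where
  "pos \<tau> = {1..length \<tau>}"

definition P :: "event list \<Rightarrow> nat \<Rightarrow> nat set" where
  "P \<tau> i = {k \<in> pos \<tau>. ev_proc (at \<tau> k) = i}"

definition L :: "event list \<Rightarrow> nat \<Rightarrow> nat set" where
  "L \<tau> j = {k \<in> pos \<tau>. ev_loc (at \<tau> k) = j}"

definition Lw :: "event list \<Rightarrow> nat \<Rightarrow> nat set" where
  "Lw \<tau> j = {k \<in> L \<tau> j. ev_op (at \<tau> k) = W}"

definition Lr :: "event list \<Rightarrow> nat \<Rightarrow> nat set" where
  "Lr \<tau> j = {k \<in> L \<tau> j. ev_op (at \<tau> k) = R}"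

definition unambiguous :: "event list \<Rightarrow> bool" where
  "unambiguous \<tau> \<longleftrightarrow>
     (\<forall>j. \<forall>x\<in>Lw \<tau> j. ev_data (at \<tau> x) \<noteq> 0 \<and>
        (\<forall>y\<in>Lw \<tau> j - {x}. ev_data (at \<tau> x) \<noteq> ev_data (at \<tau> y)))"

definition causality :: "(nat \<Rightarrow> nat \<Rightarrow> nat \<Rightarrow> 'i letter list set) \<Rightarrow> bool" where
  "causality S \<longleftrightarrow>
     (\<forall>n m v. n \<ge> 1 \<longrightarrow> m \<ge> 1 \<longrightarrow> v \<ge> 1 \<longrightarrow>
       (\<forall>\<tau>\<in>traces S n m v. \<forall>j. \<forall>x\<in>Lr \<tau> j.
          ev_data (at \<tau> x) = 0 \<or> (\<exists>y\<in>Lw \<tau> j. ev_data (at \<tau> x) = ev_data (at \<tau> y))))"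

definition M :: "event list \<Rightarrow> nat \<Rightarrow> (nat \<times> nat) set" where
  "M \<tau> i = {(u, w). u \<in> P \<tau> i \<and> w \<in> P \<tau> i \<and> u < w}"

definition strict_total_order_on :: "'a set \<Rightarrow> ('a \<times> 'a) set \<Rightarrow> bool" where
  "strict_total_order_on A r \<longleftrightarrow> r \<subseteq> A \<times> A \<and> strict_linear_order_on A r"

definition witness ::
  "(nat \<Rightarrow> nat \<Rightarrow> nat \<Rightarrow> 'i letter list set) \<Rightarrow> nat \<Rightarrow> nat \<Rightarrow> nat
     \<Rightarrow> (event list \<Rightarrow> nat \<Rightarrow> (nat \<times> nat) set) \<Rightarrow> bool" where
  "witness S n m v \<Omega> \<longleftrightarrow>
     (\<forall>\<tau>\<in>traces S n m v. \<forall>j\<in>{1..m}. strict_total_order_on (Lw \<tau> j) (\<Omega> \<tau> j))"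

definition Omega_e :: "(event list \<Rightarrow> nat \<Rightarrow> (nat \<times> nat) set) \<Rightarrow> event list \<Rightarrow> nat \<Rightarrow> (nat \<times> nat) set" where
  "Omega_e \<Omega> \<tau> j = {(x, y). x \<in> L \<tau> j \<and> y \<in> L \<tau> j \<and>
      ((ev_data (at \<tau> x) = ev_data (at \<tau> y) \<and> ev_op (at \<tau> x) = W \<and> ev_op (at \<tau> y) = R)
     \<or> (ev_data (at \<tau> x) = 0 \<and> ev_data (at \<tau> y) \<noteq> 0)
     \<or> (\<exists>a\<in>Lw \<tau> j. \<exists>b\<in>Lw \<tau> j. (a, b) \<in> \<Omega> \<tau> j \<and>
          ev_data (at \<tau> a) = ev_data (at \<tau> x) \<and> ev_data (at \<tau> b) = ev_data (at \<tau> y)))}"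

text \<open>Edge set of G(Omega)(tau); its vertex set is pos tau, which contains all endpoints.\<close>
definition G_edges :: "(event list \<Rightarrow> nat \<Rightarrow> (nat \<times> nat) set) \<Rightarrow> event list \<Rightarrow> nat \<Rightarrow> nat \<Rightarrow> (nat \<times> nat) set" where
  "G_edges \<Omega> \<tau> n m = (\<Union>i\<in>{1..n}. M \<tau> i) \<union> (\<Union>j\<in>{1..m}. Omega_e \<Omega> \<tau> j)"

text \<open>x \<oplus> 1 in the cyclic group on N_k with identity k.\<close>
definition cyc_succ :: "nat \<Rightarrow> nat \<Rightarrow> nat" where
  "cyc_succ k x = (if x < k then x + 1 else 1)"

text \<open>u, v encode the sequence u_1, v_1, ..., u_k, v_k.\<close>
definition nice_cycle ::
  "(event list \<Rightarrow> nat \<Rightarrow> (nat \<times> nat) set) \<Rightarrow> event list \<Rightarrow> nat \<Rightarrow> nat \<Rightarrow> nat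
     \<Rightarrow> (nat \<Rightarrow> nat) \<Rightarrow> (nat \<Rightarrow> nat) \<Rightarrow> bool" where
  "nice_cycle \<Omega> \<tau> n m k u v \<longleftrightarrow>
     inj_on u {1..k} \<and> inj_on v {1..k} \<and> u ` {1..k} \<inter> v ` {1..k} = {} \<and>
     u ` {1..k} \<subseteq> pos \<tau> \<and> v ` {1..k} \<subseteq> pos \<tau> \<and>
     (\<forall>x\<in>{1..k}. (\<exists>i\<in>{1..n}. (u x, v x) \<in> M \<tau> i) \<and>
                  (\<exists>j\<in>{1..m}. (v x, u (cyc_succ k x)) \<in> Omega_e \<Omega> \<tau> j)) \<and>
     (\<forall>x y i i'. 1 \<le> x \<longrightarrow> x < y \<longrightarrow> y \<le> k \<longrightarrow>
        (u x, v x) \<in> M \<tau> i \<longrightarrow> (u y, v y) \<in> M \<tau> i' \<longrightarrow> i \<noteq> i') \<and>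
     (\<forall>x y j j'. 1 \<le> x \<longrightarrow> x < y \<longrightarrow> y \<le> k \<longrightarrow>
        (v x, u (cyc_succ k x)) \<in> Omega_e \<Omega> \<tau> j \<longrightarrow>
        (v y, u (cyc_succ k y)) \<in> Omega_e \<Omega> \<tau> j' \<longrightarrow> j \<noteq> j')"

end

theory Submission
  imports Defs "HOL-Library.Disjoint_Sets"
begin

(* Both kinds of edges of G(Omega)(tau) come in blocks: the program order M(tau,i) of processor i
   and the relation Omega^e(tau,j) of location j.  Every block is a strict weak order on its own
   set of positions (for Omega^e, an event is ranked by the Omega-position of the write it reads
   from), and blocks of one kind have disjoint supports, so the union of each kind is transitive.
   Hence any cycle can be turned into one that alternates between the two kinds.  In an
   alternating cycle of minimal length every chord would cut out a shorter one; since weak orders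
   are Ferrers relations (a < b and c < d imply a < d or c < b), two edges of the cycle in the same
   block would produce such a chord.  So the edges of a minimal alternating cycle lie in pairwise
   distinct blocks, its vertices are distinct, and its length is at most min n m. *)

section \<open>Ranked relations\<close>

definition ferrers :: "'a rel \<Rightarrow> bool" where
  "ferrers r \<longleftrightarrow> (\<forall>a b c d. (a, b) \<in> r \<longrightarrow> (c, d) \<in> r \<longrightarrow> (a, d) \<in> r \<or> (c, b) \<in> r)"

definition ranked_on :: "'a set \<Rightarrow> 'a rel \<Rightarrow> bool" where
  "ranked_on D r \<longleftrightarrow> (\<exists>rank :: 'a \<Rightarrow> nat. r = {(x, y). x \<in> D \<and> y \<in> D \<and> rank x < rank y})"

lemma ranked_onI:
  assumes "\<And>x y. (x, y) \<in> r \<longleftrightarrow> x \<in> D \<and> y \<in> D \<and> rank x < (rank y :: nat)"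
  shows "ranked_on D r"
  unfolding ranked_on_def using assms by blast

lemma ranked_on_subset: "ranked_on D r \<Longrightarrow> r \<subseteq> D \<times> D"
  unfolding ranked_on_def by auto

lemma ranked_on_irrefl: "ranked_on D r \<Longrightarrow> irrefl r"
  unfolding ranked_on_def irrefl_def by auto

lemma ranked_on_trans: "ranked_on D r \<Longrightarrow> trans r"
  unfolding ranked_on_def trans_def by auto

lemma ranked_on_ferrers: "ranked_on D r \<Longrightarrow> ferrers r"
  unfolding ranked_on_def ferrers_def by auto

lemma disjoint_family_block_unique:
  assumes "disjoint_family D" "\<And>i. F i \<subseteq> D i \<times> D i" and "p \<in> F i" "p \<in> F i'"
  shows "i = i'"
proof -
  have "fst p \<in> D i \<inter> D i'" using assms(2-4) by (force simp: mem_Times_iff)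
  then show ?thesis using disjoint_family_onD[OF assms(1)] by blast
qed

lemma irrefl_UN: "(\<And>i. i \<in> I \<Longrightarrow> irrefl (F i)) \<Longrightarrow> irrefl (\<Union>i\<in>I. F i)"
  by (auto simp: irrefl_def)

lemma trans_UN_disjoint_family:
  assumes "disjoint_family D" and "\<And>i. F i \<subseteq> D i \<times> D i" and "\<And>i. i \<in> I \<Longrightarrow> trans (F i)"
  shows "trans (\<Union>i\<in>I. F i)"
proof (rule transI)
  fix a b c assume "(a, b) \<in> (\<Union>i\<in>I. F i)" "(b, c) \<in> (\<Union>i\<in>I. F i)"
  then obtain i i' where i: "i \<in> I" "(a, b) \<in> F i" and "(b, c) \<in> F i'" by blast
  moreover have "i' = i"
    using assms(1,2) i \<open>(b, c) \<in> F i'\<close> by (force simp: disjoint_family_on_def)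
  ultimately show "(a, c) \<in> (\<Union>i\<in>I. F i)" using assms(3) by (blast dest: transD)
qed

lemma finite_strict_linear_order_on_rank:
  assumes "finite A" and "strict_linear_order_on A r"
  obtains rank :: "'a \<Rightarrow> nat"
  where "\<And>a b. a \<in> A \<Longrightarrow> b \<in> A \<Longrightarrow> (a, b) \<in> r \<longleftrightarrow> rank a < rank b" and "inj_on rank A"
proof
  have tr: "trans r" and irr: "irrefl r" and tot: "total_on A r"
    using assms(2) unfolding strict_linear_order_on_def by auto
  define rank where "rank a = card {c \<in> A. (c, a) \<in> r}" for a
  have rank_less: "rank a < rank b" if "a \<in> A" "(a, b) \<in> r" for a b
    unfolding rank_def
  proof (rule psubset_card_mono)
    show "{c \<in> A. (c, a) \<in> r} \<subset> {c \<in> A. (c, b) \<in> r}"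
      using that tr irr by (auto simp: irrefl_def dest: transD)
  qed (use assms(1) in simp)
  show "inj_on rank A"
    using rank_less tot unfolding total_on_def inj_on_def by (metis less_irrefl)
  fix a b assume "a \<in> A" "b \<in> A"
  then show "(a, b) \<in> r \<longleftrightarrow> rank a < rank b"
    using rank_less tot unfolding total_on_def by (metis less_asym less_irrefl)
qed

lemma ranked_on_lex:
  fixes f :: "'a \<Rightarrow> nat"
  assumes "\<And>x y. (x, y) \<in> r \<longleftrightarrow> x \<in> D \<and> y \<in> D \<and> (f x < f y \<or> f x = f y \<and> \<not> p x \<and> p y)"
  shows "ranked_on D r"
proof (rule ranked_onI)
  fix x y
  show "(x, y) \<in> r \<longleftrightarrow> x \<in> D \<and> y \<in> D \<and> 2 * f x + of_bool (p x) < 2 * f y + of_bool (p y)"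
    unfolding assms by auto
qed

section \<open>Cycles in a union of two transitive relations\<close>

lemma relcomp_trancl_absorb_left:
  assumes "trans A" and "(a, b) \<in> A" and "(b, c) \<in> (A O B)\<^sup>+"
  shows "(a, c) \<in> (A O B)\<^sup>+"
proof -
  obtain d where "(b, d) \<in> A O B" and "(d, c) \<in> (A O B)\<^sup>*"
    using assms(3) by (blast dest: tranclD)
  moreover from this(1) have "(a, d) \<in> A O B"
    using assms(1,2) by (blast dest: transD)
  ultimately show ?thesis by (blast intro: rtrancl_into_trancl2)
qed

lemma relcomp_trancl_absorb_right:
  assumes "trans B" and "(a, b) \<in> (A O B)\<^sup>+" and "(b, c) \<in> B"
  shows "(a, c) \<in> (A O B)\<^sup>+"
proof -
  obtain d where "(a, d) \<in> (A O B)\<^sup>*" and "(d, b) \<in> A O B"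
    using assms(2) by (blast dest: tranclD2)
  moreover from this(2) have "(d, c) \<in> A O B"
    using assms(1,3) by (blast dest: transD)
  ultimately show ?thesis by (blast intro: rtrancl_into_trancl1)
qed

lemma trancl_Un_of_trans:
  assumes "trans A" and "trans B"
  shows "(A \<union> B)\<^sup>+ \<subseteq> A \<union> B \<union> B O A \<union> B\<^sup>= O (A O B)\<^sup>+ O A\<^sup>="
proof (rule subrelI)
  fix x z assume "(x, z) \<in> (A \<union> B)\<^sup>+"
  then show "(x, z) \<in> A \<union> B \<union> B O A \<union> B\<^sup>= O (A O B)\<^sup>+ O A\<^sup>="
  proof (induction rule: trancl_induct)
    case (step y z)
    have AA: "(a, c) \<in> A" if "(a, b) \<in> A" "(b, c) \<in> A" for a b c
      using assms(1) that by (rule transD)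
    have BB: "(a, c) \<in> B" if "(a, b) \<in> B" "(b, c) \<in> B" for a b c
      using assms(2) that by (rule transD)
    from step.hyps(2) show ?case
    proof
      assume "(y, z) \<in> A"
      with step.IH show ?case by (blast intro: AA)
    next
      assume "(y, z) \<in> B"
      with step.IH show ?case
        by (blast intro: BB relcomp_trancl_absorb_right[OF assms(2)] trancl_into_trancl)
    qed
  qed blast
qed

lemma cycle_Un_imp_cycle_relcomp:
  assumes "trans A" "trans B" "irrefl A" "irrefl B" and "(x, x) \<in> (A \<union> B)\<^sup>+"
  shows "\<exists>y. (y, y) \<in> (A O B)\<^sup>+"
proof -
  have "(x, x) \<in> B O A \<union> B\<^sup>= O (A O B)\<^sup>+ O A\<^sup>="
    using trancl_Un_of_trans[OF assms(1,2)] assms(3-5) by (auto simp: irrefl_def)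
  then consider w where "(x, w) \<in> B" "(w, x) \<in> A"
    | a b where "(x, a) \<in> B\<^sup>=" "(a, b) \<in> (A O B)\<^sup>+" "(b, x) \<in> A\<^sup>="
    by blast
  then show ?thesis
  proof cases
    case 1
    then show ?thesis by blast
  next
    case (2 a b)
    \<comment> \<open>The detour from b via x to a has at most one A- and one B-edge, both absorbed by the path from a to b.\<close>
    then show ?thesis
      using relcomp_trancl_absorb_left[OF assms(1)] relcomp_trancl_absorb_right[OF assms(2)]
      by (blast intro: trancl_into_trancl2)
  qed
qed

definition distinct_blocks :: "('b \<Rightarrow> 'a rel) \<Rightarrow> nat \<Rightarrow> (nat \<Rightarrow> 'a \<times> 'a) \<Rightarrow> bool" where
  "distinct_blocks F k e \<longleftrightarrow>
     (\<forall>x y i i'. 1 \<le> x \<longrightarrow> x < y \<longrightarrow> y \<le> k \<longrightarrow> e x \<in> F i \<longrightarrow> e y \<in> F i' \<longrightarrow> i \<noteq> i')"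

lemma distinct_blocksI:
  assumes "disjoint_family D" "\<And>i. F i \<subseteq> D i \<times> D i" "\<And>i. i \<in> I \<Longrightarrow> ferrers (F i)"
    and edges: "\<And>x. x \<in> {1..k} \<Longrightarrow> e x \<in> (\<Union>i\<in>I. F i)"
    and separated: "\<And>C x y. ferrers C \<Longrightarrow> C \<subseteq> (\<Union>i\<in>I. F i) \<Longrightarrow> 1 \<le> x \<Longrightarrow> x < y \<Longrightarrow> y \<le> k \<Longrightarrow>
      e x \<in> C \<Longrightarrow> e y \<notin> C"
  shows "distinct_blocks F k e"
  unfolding distinct_blocks_def
proof (intro allI impI notI)
  fix x y i i' assume xy: "1 \<le> x" "x < y" "y \<le> k" and "e x \<in> F i" "e y \<in> F i'" "i = i'"
  obtain i0 where "i0 \<in> I" "e x \<in> F i0" using edges xy by fastforce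
  then have "i \<in> I"
    using disjoint_family_block_unique[OF assms(1,2) \<open>e x \<in> F i\<close>] by blast
  then have "ferrers (F i)" "F i \<subseteq> (\<Union>i\<in>I. F i)" using assms(3) by auto
  from separated[OF this xy \<open>e x \<in> F i\<close>] show False
    using \<open>e y \<in> F i'\<close> \<open>i = i'\<close> by simp
qed

lemma card_le_of_distinct_blocks:
  assumes "finite I" "distinct_blocks F k e" and edges: "\<And>x. x \<in> {1..k} \<Longrightarrow> \<exists>i\<in>I. e x \<in> F i"
  shows "k \<le> card I"
proof -
  define block where "block x = (SOME i. i \<in> I \<and> e x \<in> F i)" for x
  have block: "block x \<in> I" "e x \<in> F (block x)" if "x \<in> {1..k}" for x
    using someI_ex[OF edges[OF that, unfolded Bex_def]] unfolding block_def by blast+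
  have neq: "block x \<noteq> block y" if "x \<in> {1..k}" "y \<in> {1..k}" "x < y" for x y
    using assms(2) block[OF that(1)] block[OF that(2)] that unfolding distinct_blocks_def by auto
  have "inj_on block {1..k}"
  proof (rule inj_onI)
    fix x y assume "x \<in> {1..k}" "y \<in> {1..k}" "block x = block y"
    then show "x = y" using neq[of x y] neq[of y x] by (cases x y rule: linorder_cases) auto
  qed
  moreover have "block ` {1..k} \<subseteq> I" using block by blast
  ultimately show ?thesis using card_inj_on_le[OF _ _ \<open>finite I\<close>] by fastforce
qed

section \<open>Minimal alternating cycles\<close>

(* Periodic sequences spare the chord arguments below any index arithmetic modulo k. *)
definition alternating_cycle :: "'a rel \<Rightarrow> 'a rel \<Rightarrow> nat \<Rightarrow> (nat \<Rightarrow> 'a) \<Rightarrow> (nat \<Rightarrow> 'a) \<Rightarrow> bool" where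
  "alternating_cycle A B k u v \<longleftrightarrow> 0 < k \<and>
     (\<forall>t. (u t, v t) \<in> A \<and> (v t, u (Suc t)) \<in> B) \<and> (\<forall>t. u (t + k) = u t \<and> v (t + k) = v t)"

lemma alternating_cycle_close:
  assumes "0 < k"
    and A: "\<And>t. s \<le> t \<Longrightarrow> t < s + k \<Longrightarrow> (u t, v t) \<in> A"
    and B: "\<And>t. s \<le> t \<Longrightarrow> Suc t < s + k \<Longrightarrow> (v t, u (Suc t)) \<in> B"
    and closing: "(v (s + k - 1), u s) \<in> B"
  shows "alternating_cycle A B k (\<lambda>t. u (s + t mod k)) (\<lambda>t. v (s + t mod k))"
  unfolding alternating_cycle_def
proof (intro conjI allI)
  fix t
  show "(u (s + t mod k), v (s + t mod k)) \<in> A" using A \<open>0 < k\<close> by simp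
  show "(v (s + t mod k), u (s + Suc t mod k)) \<in> B"
  proof (cases "Suc (t mod k) = k")
    case True
    then have "s + Suc t mod k = s" "s + t mod k = s + k - 1" by (simp_all add: mod_Suc)
    then show ?thesis using closing by simp
  next
    case False
    then have "Suc t mod k = Suc (t mod k)" "Suc (t mod k) < k"
      using mod_less_divisor[OF \<open>0 < k\<close>, of t] by (simp_all add: mod_Suc)
    then show ?thesis using B[of "s + t mod k"] by simp
  qed
qed (use \<open>0 < k\<close> in simp_all)

lemma alternating_cycle_of_trancl_relcomp:
  assumes "(y, y) \<in> (A O B)\<^sup>+"
  obtains k u v where "alternating_cycle A B k u v"
proof -
  obtain k where "0 < k" "(y, y) \<in> (A O B) ^^ k"
    using assms trancl_power by blast
  then obtain f where f: "f 0 = y" "f k = y" "\<And>t. t < k \<Longrightarrow> (f t, f (Suc t)) \<in> A O B"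
    using relpow_fun_conv by metis
  define g where "g t = (SOME w. (f t, w) \<in> A \<and> (w, f (Suc t)) \<in> B)" for t
  have g: "(f t, g t) \<in> A" "(g t, f (Suc t)) \<in> B" if "t < k" for t
    using someI_ex[OF f(3)[OF that, unfolded relcomp_unfold, simplified]] unfolding g_def by blast+
  have "alternating_cycle A B k (\<lambda>t. f (0 + t mod k)) (\<lambda>t. g (0 + t mod k))"
  proof (rule alternating_cycle_close)
    show "(g (0 + k - 1), f 0) \<in> B"
      using g(2)[of "k - 1"] f(1,2) \<open>0 < k\<close> by simp
  qed (use g \<open>0 < k\<close> in auto)
  then show ?thesis by (rule that)
qed

lemma alternating_cycle_cyc_succ:
  assumes "alternating_cycle A B k u v" "x \<in> {1..k}"
  shows "u (cyc_succ k x) = u (Suc x)"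
proof (cases "x < k")
  case False
  with assms(2) have "x = k" by simp
  moreover have "u (1 + k) = u 1"
    using assms(1) unfolding alternating_cycle_def by blast
  ultimately show ?thesis by (simp add: cyc_succ_def)
qed (simp add: cyc_succ_def)

definition minimal_alternating_cycle :: "'a rel \<Rightarrow> 'a rel \<Rightarrow> nat \<Rightarrow> (nat \<Rightarrow> 'a) \<Rightarrow> (nat \<Rightarrow> 'a) \<Rightarrow> bool" where
  "minimal_alternating_cycle A B k u v \<longleftrightarrow> alternating_cycle A B k u v \<and>
     (\<forall>k' u' v'. alternating_cycle A B k' u' v' \<longrightarrow> k \<le> k')"

lemma minimal_alternating_cycle_exists:
  assumes "alternating_cycle A B k0 u0 v0"
  obtains k u v where "minimal_alternating_cycle A B k u v"
proof -
  define len where "len = (LEAST k. \<exists>u v. alternating_cycle A B k u v)"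
  obtain u v where "alternating_cycle A B len u v"
    using LeastI_ex[of "\<lambda>k. \<exists>u v. alternating_cycle A B k u v"] assms unfolding len_def by blast
  moreover have "len \<le> k'" if "alternating_cycle A B k' u' v'" for k' u' v'
    using that unfolding len_def by (blast intro: Least_le)
  ultimately have "minimal_alternating_cycle A B len u v"
    unfolding minimal_alternating_cycle_def by blast
  then show ?thesis by (rule that)
qed

context
  fixes A B k u v
  assumes minimal: "minimal_alternating_cycle A B k u v"
begin

private lemma alternating: "0 < k" "(u t, v t) \<in> A" "(v t, u (Suc t)) \<in> B" "u (t + k) = u t" "v (t + k) = v t"
  using minimal unfolding minimal_alternating_cycle_def alternating_cycle_def by auto

lemma minimal_alternating_cycle_no_A_chord:
  assumes "a < b" "b < a + k"
  shows "(u a, v b) \<notin> A"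
proof
  assume chord: "(u a, v b) \<in> A"
  \<comment> \<open>The arc from u (b + 1) to u (a + k) = u a, closed through the chord, is a shorter cycle.\<close>
  define v' where "v' = v(a + k := v b)"
  have "alternating_cycle A B (a + k - b) (\<lambda>t. u (Suc b + t mod (a + k - b))) (\<lambda>t. v' (Suc b + t mod (a + k - b)))"
  proof (rule alternating_cycle_close)
    fix t assume "Suc b \<le> t" "t < Suc b + (a + k - b)"
    then show "(u t, v' t) \<in> A"
      using alternating(2)[of t] alternating(4)[of a] chord unfolding v'_def by (cases "t = a + k") auto
  next
    fix t assume "Suc b \<le> t" "Suc t < Suc b + (a + k - b)"
    then show "(v' t, u (Suc t)) \<in> B"
      using alternating(3)[of t] assms unfolding v'_def by auto
  next
    show "(v' (Suc b + (a + k - b) - 1), u (Suc b)) \<in> B"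
      using alternating(3)[of b] assms unfolding v'_def by auto
  qed (use assms in simp)
  then show False using minimal assms unfolding minimal_alternating_cycle_def by fastforce
qed

lemma minimal_alternating_cycle_no_B_chord:
  assumes "Suc a < b" "b \<le> a + k"
  shows "(v a, u b) \<notin> B"
proof
  assume chord: "(v a, u b) \<in> B"
  \<comment> \<open>The arc from u b to v (a + k) = v a, closed through the chord, is a shorter cycle.\<close>
  have "alternating_cycle A B (Suc (a + k) - b) (\<lambda>t. u (b + t mod (Suc (a + k) - b))) (\<lambda>t. v (b + t mod (Suc (a + k) - b)))"
  proof (rule alternating_cycle_close)
    show "(v (b + (Suc (a + k) - b) - 1), u b) \<in> B"
      using chord alternating(5)[of a] assms by simp
  qed (use assms alternating(2,3) in auto)
  then show False using minimal assms unfolding minimal_alternating_cycle_def by fastforce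
qed

lemma minimal_alternating_cycle_fst_neq:
  assumes "x < y" "y < x + k"
  shows "u x \<noteq> u y"
proof
  assume "u x = u y"
  then have "(v (y - 1), u (x + k)) \<in> B"
    using alternating(3)[of "y - 1"] alternating(4)[of x] assms by simp
  with assms show False using minimal_alternating_cycle_no_B_chord by simp
qed

lemma minimal_alternating_cycle_snd_neq:
  assumes "x < y" "y < x + k"
  shows "v x \<noteq> v y"
  using alternating(2)[of x] minimal_alternating_cycle_no_A_chord[OF assms] by auto

lemma minimal_alternating_cycle_fst_neq_snd:
  assumes "trans A" "irrefl A" and "y < x + k" "x < y + k"
  shows "u x \<noteq> v y"
proof
  assume "u x = v y"
  then have "(u y, v x) \<in> A"
    using alternating(2)[of y] alternating(2)[of x] \<open>trans A\<close> by (metis transD)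
  consider "x = y" | "y < x" | "x < y" by linarith
  then show False
  proof cases
    case 1
    then show False using alternating(2)[of x] \<open>u x = v y\<close> \<open>irrefl A\<close> by (simp add: irrefl_def)
  next
    case 2
    then show False using \<open>(u y, v x) \<in> A\<close> minimal_alternating_cycle_no_A_chord assms(4) by simp
  next
    case 3
    have "(u y, v (x + k)) \<in> A"
      using \<open>(u y, v x) \<in> A\<close> alternating(5)[of x] by simp
    moreover have "y < x + k" "x + k < y + k" using 3 assms(3) by simp_all
    ultimately show False using minimal_alternating_cycle_no_A_chord by blast
  qed
qed

lemma minimal_alternating_cycle_distinct:
  assumes "trans A" "irrefl A"
  shows "inj_on u {1..k}" "inj_on v {1..k}" "u ` {1..k} \<inter> v ` {1..k} = {}"
proof -
  have window: "x < y + k" if "x \<in> {1..k}" "y \<in> {1..k}" for x y using that by simp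
  show "inj_on u {1..k}"
  proof (rule inj_onI)
    fix x y assume "x \<in> {1..k}" "y \<in> {1..k}" "u x = u y"
    then show "x = y"
      using minimal_alternating_cycle_fst_neq[of x y] minimal_alternating_cycle_fst_neq[of y x]
      by (cases x y rule: linorder_cases) auto
  qed
  show "inj_on v {1..k}"
  proof (rule inj_onI)
    fix x y assume "x \<in> {1..k}" "y \<in> {1..k}" "v x = v y"
    then show "x = y"
      using minimal_alternating_cycle_snd_neq[of x y] minimal_alternating_cycle_snd_neq[of y x]
      by (cases x y rule: linorder_cases) auto
  qed
  show "u ` {1..k} \<inter> v ` {1..k} = {}"
    using minimal_alternating_cycle_fst_neq_snd[OF assms] window by fastforce
qed

lemma minimal_alternating_cycle_ferrers_fst:
  assumes "ferrers C" "C \<subseteq> A" and "x < y" "y < x + k" and "(u x, v x) \<in> C"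
  shows "(u y, v y) \<notin> C"
proof
  assume "(u y, v y) \<in> C"
  with assms(1,5) have "(u x, v y) \<in> C \<or> (u y, v x) \<in> C"
    unfolding ferrers_def by blast
  then have "(u x, v y) \<in> A \<or> (u y, v (x + k)) \<in> A"
    using assms(2) alternating(5)[of x] by auto
  with assms(3,4) show False using minimal_alternating_cycle_no_A_chord by auto
qed

lemma minimal_alternating_cycle_ferrers_snd:
  assumes "ferrers C" "C \<subseteq> B" and "x < y" "y < x + k" and "(v x, u (Suc x)) \<in> C"
  shows "(v y, u (Suc y)) \<notin> C"
proof
  assume "(v y, u (Suc y)) \<in> C"
  with assms(1,5) have "(v x, u (Suc y)) \<in> C \<or> (v y, u (Suc x)) \<in> C"
    unfolding ferrers_def by blast
  then have "(v x, u (Suc y)) \<in> B \<or> (v y, u (Suc x + k)) \<in> B"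
    using assms(2) alternating(4)[of "Suc x"] by auto
  with assms(3,4) show False using minimal_alternating_cycle_no_B_chord by auto
qed

lemma minimal_alternating_cycle_distinct_blocks_fst:
  assumes "disjoint_family D" "\<And>i. F i \<subseteq> D i \<times> D i" "\<And>i. i \<in> I \<Longrightarrow> ferrers (F i)"
    and "A = (\<Union>i\<in>I. F i)"
  shows "distinct_blocks F k (\<lambda>x. (u x, v x))"
proof (rule distinct_blocksI[OF assms(1-3)])
  show "\<And>x. (u x, v x) \<in> (\<Union>i\<in>I. F i)" using alternating(2) assms(4) by simp
  fix C x y assume "ferrers C" "C \<subseteq> (\<Union>i\<in>I. F i)" "1 \<le> x" "x < y" "y \<le> k" "(u x, v x) \<in> C"
  then show "(u y, v y) \<notin> C" using minimal_alternating_cycle_ferrers_fst assms(4) by simp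
qed

lemma minimal_alternating_cycle_distinct_blocks_snd:
  assumes "disjoint_family D" "\<And>j. G j \<subseteq> D j \<times> D j" "\<And>j. j \<in> J \<Longrightarrow> ferrers (G j)"
    and "B = (\<Union>j\<in>J. G j)"
  shows "distinct_blocks G k (\<lambda>x. (v x, u (cyc_succ k x)))"
proof (rule distinct_blocksI[OF assms(1-3)])
  have succ: "u (cyc_succ k x) = u (Suc x)" if "x \<in> {1..k}" for x
    using alternating_cycle_cyc_succ minimal that unfolding minimal_alternating_cycle_def by blast
  show "\<And>x. x \<in> {1..k} \<Longrightarrow> (v x, u (cyc_succ k x)) \<in> (\<Union>j\<in>J. G j)"
    using alternating(3) succ assms(4) by simp
  fix C x y assume "ferrers C" "C \<subseteq> (\<Union>j\<in>J. G j)" "1 \<le> x" "x < y" "y \<le> k"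
    "(v x, u (cyc_succ k x)) \<in> C"
  then show "(v y, u (cyc_succ k y)) \<notin> C"
    using minimal_alternating_cycle_ferrers_snd succ assms(4) by simp
qed

end

theorem cycle_imp_short_alternating_cycle:
  fixes F :: "'b \<Rightarrow> 'a rel" and G :: "'c \<Rightarrow> 'a rel"
  assumes F: "finite I" "disjoint_family D" "\<And>i. F i \<subseteq> D i \<times> D i" "\<And>i. i \<in> I \<Longrightarrow> ranked_on (D i) (F i)"
    and G: "finite J" "disjoint_family D'" "\<And>j. G j \<subseteq> D' j \<times> D' j" "\<And>j. j \<in> J \<Longrightarrow> ranked_on (D' j) (G j)"
    and cyclic: "\<not> acyclic ((\<Union>i\<in>I. F i) \<union> (\<Union>j\<in>J. G j))"
  obtains k u v where "1 \<le> k" "k \<le> card I" "k \<le> card J"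
    "inj_on u {1..k}" "inj_on v {1..k}" "u ` {1..k} \<inter> v ` {1..k} = {}"
    "\<forall>x\<in>{1..k}. (\<exists>i\<in>I. (u x, v x) \<in> F i) \<and> (\<exists>j\<in>J. (v x, u (cyc_succ k x)) \<in> G j)"
    "distinct_blocks F k (\<lambda>x. (u x, v x))" "distinct_blocks G k (\<lambda>x. (v x, u (cyc_succ k x)))"
proof -
  define A where "A = (\<Union>i\<in>I. F i)"
  define B where "B = (\<Union>j\<in>J. G j)"
  have "trans A" unfolding A_def by (rule trans_UN_disjoint_family[OF F(2,3) ranked_on_trans[OF F(4)]])
  have "trans B" unfolding B_def by (rule trans_UN_disjoint_family[OF G(2,3) ranked_on_trans[OF G(4)]])
  have "irrefl A" unfolding A_def by (rule irrefl_UN[OF ranked_on_irrefl[OF F(4)]])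
  have "irrefl B" unfolding B_def by (rule irrefl_UN[OF ranked_on_irrefl[OF G(4)]])
  obtain x where "(x, x) \<in> (A \<union> B)\<^sup>+" using cyclic unfolding A_def B_def acyclic_def by blast
  then obtain y where "(y, y) \<in> (A O B)\<^sup>+"
    using cycle_Un_imp_cycle_relcomp[OF \<open>trans A\<close> \<open>trans B\<close> \<open>irrefl A\<close> \<open>irrefl B\<close>] by blast
  then obtain k0 u0 v0 where "alternating_cycle A B k0 u0 v0"
    by (rule alternating_cycle_of_trancl_relcomp)
  then obtain k u v where min: "minimal_alternating_cycle A B k u v"
    by (rule minimal_alternating_cycle_exists)
  then have alt: "alternating_cycle A B k u v" unfolding minimal_alternating_cycle_def by blast
  have edges: "\<forall>x\<in>{1..k}. (\<exists>i\<in>I. (u x, v x) \<in> F i) \<and> (\<exists>j\<in>J. (v x, u (cyc_succ k x)) \<in> G j)"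
    using alt alternating_cycle_cyc_succ[OF alt] unfolding alternating_cycle_def A_def B_def by auto
  have blocks: "distinct_blocks F k (\<lambda>x. (u x, v x))" "distinct_blocks G k (\<lambda>x. (v x, u (cyc_succ k x)))"
    using minimal_alternating_cycle_distinct_blocks_fst[OF min F(2,3) ranked_on_ferrers[OF F(4)] A_def]
      minimal_alternating_cycle_distinct_blocks_snd[OF min G(2,3) ranked_on_ferrers[OF G(4)] B_def]
    by blast+
  have "k \<le> card I" "k \<le> card J"
    using card_le_of_distinct_blocks[OF F(1) blocks(1)] card_le_of_distinct_blocks[OF G(1) blocks(2)] edges
    by auto
  moreover have "1 \<le> k" using alt unfolding alternating_cycle_def by simp
  ultimately show ?thesis
    using minimal_alternating_cycle_distinct[OF min \<open>trans A\<close> \<open>irrefl A\<close>] edges blocks by (intro that)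
qed

section \<open>Memory traces\<close>

lemma M_ranked_on: "ranked_on (P \<tau> i) (M \<tau> i)"
  by (rule ranked_onI[where rank = id]) (simp add: M_def)

lemma disjoint_family_P: "disjoint_family (P \<tau>)"
  by (auto simp: disjoint_family_on_def P_def)

lemma disjoint_family_L: "disjoint_family (L \<tau>)"
  by (auto simp: disjoint_family_on_def L_def)

lemma Omega_e_subset: "Omega_e \<Omega> \<tau> j \<subseteq> L \<tau> j \<times> L \<tau> j"
  by (auto simp: Omega_e_def)

lemma unambiguous_Lw_data_nonzero: "unambiguous \<tau> \<Longrightarrow> w \<in> Lw \<tau> j \<Longrightarrow> ev_data (at \<tau> w) \<noteq> 0"
  unfolding unambiguous_def by blast

lemma unambiguous_Lw_data_inj: "unambiguous \<tau> \<Longrightarrow> inj_on (\<lambda>w. ev_data (at \<tau> w)) (Lw \<tau> j)"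
  unfolding unambiguous_def inj_on_def by blast

lemma Omega_e_iff_level:
  assumes "unambiguous \<tau>"
    and reads_from: "\<And>z. z \<in> Lr \<tau> j \<Longrightarrow> ev_data (at \<tau> z) \<noteq> 0 \<Longrightarrow>
      \<exists>w\<in>Lw \<tau> j. ev_data (at \<tau> w) = ev_data (at \<tau> z)"
    and rank: "\<And>a b. a \<in> Lw \<tau> j \<Longrightarrow> b \<in> Lw \<tau> j \<Longrightarrow> (a, b) \<in> \<Omega> \<tau> j \<longleftrightarrow> rank a < rank b"
      "inj_on rank (Lw \<tau> j)"
    and level_0: "\<And>z. level z = 0 \<longleftrightarrow> ev_data (at \<tau> z) = 0"
    and level_writer: "\<And>z w. w \<in> Lw \<tau> j \<Longrightarrow> ev_data (at \<tau> w) = ev_data (at \<tau> z) \<Longrightarrow> level z = Suc (rank w)"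
    and x: "x \<in> L \<tau> j" and y: "y \<in> L \<tau> j"
  shows "(x, y) \<in> Omega_e \<Omega> \<tau> j \<longleftrightarrow>
    level x < level y \<or> level x = level y \<and> ev_op (at \<tau> x) \<noteq> R \<and> ev_op (at \<tau> y) = R"
proof -
  note nonzero = unambiguous_Lw_data_nonzero[OF \<open>unambiguous \<tau>\<close>]
  note unique = inj_onD[OF unambiguous_Lw_data_inj[OF \<open>unambiguous \<tau>\<close>]]
  have not_read: "ev_op (at \<tau> x) \<noteq> R \<longleftrightarrow> x \<in> Lw \<tau> j"
    using x unfolding Lw_def by (cases "ev_op (at \<tau> x)") auto
  have writer: "\<exists>w\<in>Lw \<tau> j. ev_data (at \<tau> w) = ev_data (at \<tau> z)"
    if "z \<in> L \<tau> j" "ev_data (at \<tau> z) \<noteq> 0" for z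
    using that reads_from unfolding Lr_def Lw_def by (cases "ev_op (at \<tau> z)") auto
  have "(x, y) \<in> Omega_e \<Omega> \<tau> j \<longleftrightarrow>
      ev_data (at \<tau> x) = ev_data (at \<tau> y) \<and> x \<in> Lw \<tau> j \<and> ev_op (at \<tau> y) = R \<or>
      ev_data (at \<tau> x) = 0 \<and> ev_data (at \<tau> y) \<noteq> 0 \<or>
      (\<exists>a\<in>Lw \<tau> j. \<exists>b\<in>Lw \<tau> j. rank a < rank b \<and>
         ev_data (at \<tau> a) = ev_data (at \<tau> x) \<and> ev_data (at \<tau> b) = ev_data (at \<tau> y))"
    using x y rank(1) unfolding Omega_e_def Lw_def by auto
  also have "\<dots> \<longleftrightarrow> level x < level y \<or> level x = level y \<and> ev_op (at \<tau> x) \<noteq> R \<and> ev_op (at \<tau> y) = R"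
  proof -
    consider "ev_data (at \<tau> x) = 0" | "ev_data (at \<tau> x) \<noteq> 0" "ev_data (at \<tau> y) = 0"
      | a b where "a \<in> Lw \<tau> j" "ev_data (at \<tau> a) = ev_data (at \<tau> x)"
        "b \<in> Lw \<tau> j" "ev_data (at \<tau> b) = ev_data (at \<tau> y)"
        "ev_data (at \<tau> x) \<noteq> 0" "ev_data (at \<tau> y) \<noteq> 0"
      using writer x y by blast
    then show ?thesis
    proof cases
      case 1
      then have "x \<notin> Lw \<tau> j" "level x = 0" using nonzero[of x] level_0 by auto
      with 1 show ?thesis using not_read level_0[of y] by (auto dest: nonzero)
    next
      case 2
      then have "level y = 0" "level x \<noteq> 0" using level_0 by auto
      with 2 show ?thesis by (auto dest: nonzero)
    next
      case (3 a b)
      have "rank a = rank b \<longleftrightarrow> ev_data (at \<tau> x) = ev_data (at \<tau> y)"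
        using 3 inj_onD[OF rank(2)] unique by metis
      moreover have "(\<exists>a'\<in>Lw \<tau> j. \<exists>b'\<in>Lw \<tau> j. rank a' < rank b' \<and>
          ev_data (at \<tau> a') = ev_data (at \<tau> x) \<and> ev_data (at \<tau> b') = ev_data (at \<tau> y)) \<longleftrightarrow>
        rank a < rank b"
        using 3 unique by metis
      ultimately show ?thesis
        using 3 level_writer[of a x] level_writer[of b y] not_read by auto
    qed
  qed
  finally show ?thesis .
qed

lemma Omega_e_ranked_on:
  assumes "strict_total_order_on (Lw \<tau> j) (\<Omega> \<tau> j)" and "unambiguous \<tau>"
    and reads_from: "\<And>z. z \<in> Lr \<tau> j \<Longrightarrow> ev_data (at \<tau> z) \<noteq> 0 \<Longrightarrow>
      \<exists>w\<in>Lw \<tau> j. ev_data (at \<tau> w) = ev_data (at \<tau> z)"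
  shows "ranked_on (L \<tau> j) (Omega_e \<Omega> \<tau> j)"
proof -
  have "finite (Lw \<tau> j)" unfolding Lw_def L_def pos_def by simp
  then obtain rank :: "nat \<Rightarrow> nat" where
    rank: "\<And>a b. a \<in> Lw \<tau> j \<Longrightarrow> b \<in> Lw \<tau> j \<Longrightarrow> (a, b) \<in> \<Omega> \<tau> j \<longleftrightarrow> rank a < rank b"
      "inj_on rank (Lw \<tau> j)"
    using finite_strict_linear_order_on_rank assms(1) unfolding strict_total_order_on_def by metis
  \<comment> \<open>Reads of the initial value come first; every other event is placed at the rank of the write
    whose value it carries, a read just after that write.\<close>
  define level where "level z = (if ev_data (at \<tau> z) = 0 then 0
    else Suc (rank (THE w. w \<in> Lw \<tau> j \<and> ev_data (at \<tau> w) = ev_data (at \<tau> z))))" for z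
  have level_writer: "level z = Suc (rank w)"
    if "w \<in> Lw \<tau> j" "ev_data (at \<tau> w) = ev_data (at \<tau> z)" for z w
  proof -
    have "(THE w. w \<in> Lw \<tau> j \<and> ev_data (at \<tau> w) = ev_data (at \<tau> z)) = w"
      using that inj_onD[OF unambiguous_Lw_data_inj[OF assms(2)]] by (intro the_equality) auto
    then show ?thesis
      unfolding level_def using unambiguous_Lw_data_nonzero[OF assms(2) that(1)] that(2) by simp
  qed
  have level_0: "level z = 0 \<longleftrightarrow> ev_data (at \<tau> z) = 0" for z
    unfolding level_def by simp
  have "(x, y) \<in> Omega_e \<Omega> \<tau> j \<longleftrightarrow> x \<in> L \<tau> j \<and> y \<in> L \<tau> j \<and>
    (level x < level y \<or> level x = level y \<and> ev_op (at \<tau> x) \<noteq> R \<and> ev_op (at \<tau> y) = R)" for x y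
  proof (cases "x \<in> L \<tau> j \<and> y \<in> L \<tau> j")
    case True
    then show ?thesis
      using Omega_e_iff_level[where \<Omega> = \<Omega> and \<tau> = \<tau> and j = j and rank = rank and level = level]
        assms(2) reads_from rank level_0 level_writer by blast
  qed (use Omega_e_subset in blast)
  then show ?thesis by (rule ranked_on_lex)
qed

theorem theorem6p1:
  fixes Ea :: "nat \<Rightarrow> nat \<Rightarrow> nat \<Rightarrow> 'i letter set"
    and S :: "nat \<Rightarrow> nat \<Rightarrow> nat \<Rightarrow> 'i letter list set"
    and \<Omega> :: "event list \<Rightarrow> nat \<Rightarrow> (nat \<times> nat) set"
    and n m v :: nat and \<tau> :: "event list"
  assumes "memory_system Ea S"
    and "causality S"
    and "n \<ge> 1" and "m \<ge> 1" and "v \<ge> 1"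
    and "witness S n m v \<Omega>"
    and "\<tau> \<in> traces S n m v"
    and "unambiguous \<tau>"
    and "\<not> acyclic (G_edges \<Omega> \<tau> n m)"
  shows "\<exists>k u w. 1 \<le> k \<and> k \<le> min n m \<and> nice_cycle \<Omega> \<tau> n m k u w"
proof -
  have reads_from_writes: "\<forall>j. \<forall>x\<in>Lr \<tau> j. ev_data (at \<tau> x) = 0 \<or> (\<exists>y\<in>Lw \<tau> j. ev_data (at \<tau> x) = ev_data (at \<tau> y))"
    using assms(2-5,7) unfolding causality_def by blast
  have ranked: "ranked_on (L \<tau> j) (Omega_e \<Omega> \<tau> j)" if "j \<in> {1..m}" for j
  proof (rule Omega_e_ranked_on)
    show "strict_total_order_on (Lw \<tau> j) (\<Omega> \<tau> j)"
      using assms(6,7) that unfolding witness_def by blast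
    show "\<exists>w\<in>Lw \<tau> j. ev_data (at \<tau> w) = ev_data (at \<tau> x)" if "x \<in> Lr \<tau> j" "ev_data (at \<tau> x) \<noteq> 0" for x
      using reads_from_writes that by fastforce
  qed (fact assms(8))
  have cyclic: "\<not> acyclic ((\<Union>i\<in>{1..n}. M \<tau> i) \<union> (\<Union>j\<in>{1..m}. Omega_e \<Omega> \<tau> j))"
    using assms(9) unfolding G_edges_def .
  obtain k u w where "1 \<le> k" "k \<le> card {1..n}" "k \<le> card {1..m}"
    and distinct: "inj_on u {1..k}" "inj_on w {1..k}" "u ` {1..k} \<inter> w ` {1..k} = {}"
    and edges: "\<forall>x\<in>{1..k}. (\<exists>i\<in>{1..n}. (u x, w x) \<in> M \<tau> i) \<and> (\<exists>j\<in>{1..m}. (w x, u (cyc_succ k x)) \<in> Omega_e \<Omega> \<tau> j)"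
    and blocks: "distinct_blocks (M \<tau>) k (\<lambda>x. (u x, w x))" "distinct_blocks (Omega_e \<Omega> \<tau>) k (\<lambda>x. (w x, u (cyc_succ k x)))"
    by (rule cycle_imp_short_alternating_cycle[OF finite_atLeastAtMost disjoint_family_P
          ranked_on_subset[OF M_ranked_on] M_ranked_on finite_atLeastAtMost disjoint_family_L
          Omega_e_subset ranked cyclic])
  have "u ` {1..k} \<subseteq> pos \<tau>" "w ` {1..k} \<subseteq> pos \<tau>"
    using edges unfolding M_def P_def by auto
  with distinct edges blocks have "nice_cycle \<Omega> \<tau> n m k u w"
    unfolding nice_cycle_def distinct_blocks_def by (intro conjI)
  with \<open>1 \<le> k\<close> \<open>k \<le> card {1..n}\<close> \<open>k \<le> card {1..m}\<close> show ?thesis by auto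
qed

end
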